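(* Let $Y$ be a finite poset with a unique maximal node, let $(S,M)$ be a reduced quasi-excellent local ring containing $\mathbb Q$ with $|S|=|S/M|=c$, and let $\Psi:Y\to\operatorname{Spec}(S)$ be a saturated embedding that is coheight-preserving along $\operatorname{Min}(S)$. Then $\dim(Y)=\dim(S)$.
   Context: $c$ is the cardinality of $\mathbb R$. $\dim$ of a poset = supremum of lengths of finite chains (length = number of elements minus one); $x^{\uparrow}_Y=\{z\in Y:x\le z\}$. A saturated embedding $f$ satisfies $x\le y\iff f(x)\le f(y)$ and $x<_cy\Rightarrow f(x)<_cf(y)$, where $x<_cy$ means $x<y$ with nothing strictly between. $\operatorname{Spec}(S)$ is ordered by inclusion. $\Psi$ is coheight-preserving along $\operatorname{Min}(S)$ if for every minimal prime $P$ of $S$ there is $x\in Y$ with $\Psi(x)=P$ and $\dim(S/P)=\dim(x^{\uparrow}_Y)$. *)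

theory Defs
  imports "HOL-Algebra.Algebra" "HOL-Library.Equipollence" "HOL-Library.Extended_Nat"
begin

definition pdim :: "('c \<Rightarrow> 'c \<Rightarrow> bool) \<Rightarrow> 'c set \<Rightarrow> enat" where
  "pdim r A = (SUP C \<in> {C. C \<subseteq> A \<and> finite C \<and> C \<noteq> {} \<and>
                        (\<forall>x\<in>C. \<forall>y\<in>C. r x y \<or> r y x)}. enat (card C - 1))"

definition covby :: "('c \<Rightarrow> 'c \<Rightarrow> bool) \<Rightarrow> 'c set \<Rightarrow> 'c \<Rightarrow> 'c \<Rightarrow> bool" where
  "covby s A x y \<longleftrightarrow> x \<in> A \<and> y \<in> A \<and> s x y \<and> \<not> (\<exists>z\<in>A. s x z \<and> s z y)"

definition Spec :: "('a, 'b) ring_scheme \<Rightarrow> 'a set set" where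
  "Spec R = {P. primeideal P R}"

definition krull_dim :: "('a, 'b) ring_scheme \<Rightarrow> enat" where
  "krull_dim R = pdim (\<subseteq>) (Spec R)"

definition min_primes :: "('a, 'b) ring_scheme \<Rightarrow> 'a set set" where
  "min_primes R = {P \<in> Spec R. \<forall>Q \<in> Spec R. Q \<subseteq> P \<longrightarrow> Q = P}"

definition local_ring :: "('a, 'b) ring_scheme \<Rightarrow> 'a set \<Rightarrow> bool" where
  "local_ring R M \<longleftrightarrow> cring R \<and> maximalideal M R \<and> (\<forall>I. maximalideal I R \<longrightarrow> I = M)"

definition reduced_ring :: "('a, 'b) ring_scheme \<Rightarrow> bool" where
  "reduced_ring R \<longleftrightarrow> (\<forall>x \<in> carrier R. \<forall>n::nat. x [^]\<^bsub>R\<^esub> n = \<zero>\<^bsub>R\<^esub> \<longrightarrow> x = \<zero>\<^bsub>R\<^esub>)"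

text \<open>R contains Q: every positive integer multiple of 1 is a unit
  (equivalently, the canonical map Z -> R extends to Q -> R).\<close>
definition contains_rationals :: "('a, 'b) ring_scheme \<Rightarrow> bool" where
  "contains_rationals R \<longleftrightarrow> (\<forall>n::nat. n > 0 \<longrightarrow> [n] \<cdot>\<^bsub>R\<^esub> \<one>\<^bsub>R\<^esub> \<in> Units R)"

definition saturated_embedding :: "('y::order \<Rightarrow> 'a set) \<Rightarrow> ('a, 'b) ring_scheme \<Rightarrow> bool" where
  "saturated_embedding \<Psi> R \<longleftrightarrow>
     (\<forall>x. \<Psi> x \<in> Spec R) \<and>
     (\<forall>x y. x \<le> y \<longleftrightarrow> \<Psi> x \<subseteq> \<Psi> y) \<and>
     (\<forall>x y. covby (<) UNIV x y \<longrightarrow> covby (\<subset>) (Spec R) (\<Psi> x) (\<Psi> y))"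

definition coheight_preserving_min :: "('y::order \<Rightarrow> 'a set) \<Rightarrow> ('a, 'b) ring_scheme \<Rightarrow> bool" where
  "coheight_preserving_min \<Psi> R \<longleftrightarrow>
     (\<forall>P \<in> min_primes R. \<exists>x. \<Psi> x = P \<and> krull_dim (R Quot P) = pdim (\<le>) {z. x \<le> z})"

end

theory Submission
  imports Defs
begin

text \<open>Since \<Psi> is an order embedding, chains of Y map to chains of primes, so
  dim Y \<le> dim S. Conversely, the bottom of a finite chain of primes contains a
  minimal prime P, and the chain then descends to a chain of primes of S/P; hence
  dim S is the supremum of dim(S/P) over minimal primes P. Coheight preservation
  identifies dim(S/P) with the dimension of an up-set of Y, which is at most dim Y.\<close>

lemma chain_card_le_pdim:
  assumes "C \<subseteq> A" "finite C" "C \<noteq> {}" "\<forall>x\<in>C. \<forall>y\<in>C. r x y \<or> r y x"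
  shows "enat (card C - 1) \<le> pdim r A"
  unfolding pdim_def by (rule SUP_upper) (use assms in blast)

lemma pdim_mono: "A \<subseteq> B \<Longrightarrow> pdim r A \<le> pdim r B"
  unfolding pdim_def by (rule SUP_subset_mono) auto

lemma pdim_le_pdim_inj_on:
  assumes inj: "inj_on f A" and img: "f ` A \<subseteq> B"
    and mono: "\<And>x y. x \<in> A \<Longrightarrow> y \<in> A \<Longrightarrow> r x y \<Longrightarrow> s (f x) (f y)"
  shows "pdim r A \<le> pdim s B"
  unfolding pdim_def[of r]
proof (rule SUP_least)
  fix C assume C: "C \<in> {C. C \<subseteq> A \<and> finite C \<and> C \<noteq> {} \<and> (\<forall>x\<in>C. \<forall>y\<in>C. r x y \<or> r y x)}"
  then have "card (f ` C) = card C"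
    using inj_on_subset[OF inj] by (simp add: card_image)
  moreover have "enat (card (f ` C) - 1) \<le> pdim s B"
    using C img mono by (intro chain_card_le_pdim) blast+
  ultimately show "enat (card C - 1) \<le> pdim s B" by simp
qed

lemma (in cring) primeideal_Inter_chain:
  assumes ne: "C \<noteq> {}" and prime: "\<And>I. I \<in> C \<Longrightarrow> primeideal I R" and ch: "chain\<^sub>\<subseteq> C"
  shows "primeideal (\<Inter>C) R"
proof (rule primeidealI)
  show "ideal (\<Inter>C) R"
    by (rule i_Intersect) (use prime ne primeideal.axioms(1) in auto)
  show "cring R" by (rule is_cring)
  show "carrier R \<noteq> \<Inter>C"
  proof
    assume "carrier R = \<Inter>C"
    with ne obtain I where "I \<in> C" "carrier R \<subseteq> I" by blast
    then show False
      using prime primeideal.I_notcarr ideal.axioms(1) additive_subgroup.a_subset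
        primeideal.axioms(1) by blast
  qed
next
  fix a b assume ab: "a \<in> carrier R" "b \<in> carrier R" "a \<otimes> b \<in> \<Inter>C"
  show "a \<in> \<Inter>C \<or> b \<in> \<Inter>C"
  proof (rule ccontr)
    assume "\<not> (a \<in> \<Inter>C \<or> b \<in> \<Inter>C)"
    then obtain I J where IJ: "I \<in> C" "a \<notin> I" "J \<in> C" "b \<notin> J" by blast
    have "b \<in> I" and "a \<in> J"
      using primeideal.I_prime[OF prime ab(1,2)] ab(3) IJ by blast+
    with IJ ch show False unfolding chain_subset_def by blast
  qed
qed

lemma (in cring) exists_min_prime_subset:
  assumes Q: "Q \<in> Spec R"
  shows "\<exists>P\<in>min_primes R. P \<subseteq> Q"
proof -
  define A where "A = {P \<in> Spec R. P \<subseteq> Q}"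
  have po: "partial_order_on A (relation_of (\<supseteq>) A)"
    by (rule partial_order_on_relation_ofI) auto
  have "\<exists>m \<in> A. \<forall>a \<in> A. m \<supseteq> a \<longrightarrow> a = m"
  proof (rule predicate_Zorn[OF po])
    fix C assume "C \<in> Chains (relation_of (\<supseteq>) A)"
    then have CA: "C \<subseteq> A" and ch: "chain\<^sub>\<subseteq> C"
      unfolding Chains_def relation_of_def chain_subset_def by auto
    show "\<exists>u\<in>A. \<forall>a\<in>C. u \<subseteq> a"
    proof (cases "C = {}")
      case True
      with Q show ?thesis unfolding A_def by auto
    next
      case False
      have "primeideal (\<Inter>C) R"
        using CA ch False by (intro primeideal_Inter_chain) (auto simp: A_def Spec_def)
      with False CA have "\<Inter>C \<in> A" unfolding A_def Spec_def by auto
      then show ?thesis by blast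
    qed
  qed
  then obtain m where m: "m \<in> A" "\<forall>a \<in> A. m \<supseteq> a \<longrightarrow> a = m" by blast
  then have "m \<in> min_primes R" unfolding min_primes_def A_def by auto
  with m show ?thesis unfolding A_def by blast
qed

lemma (in cring) primeideal_quot_primeideal:
  assumes P: "primeideal P R" and Q: "primeideal Q R" and PQ: "P \<subseteq> Q"
  shows "primeideal ((+>) P ` Q) (R Quot P)"
proof -
  have iP: "ideal P R" and iQ: "ideal Q R" using P Q primeideal.axioms(1) by auto
  have iQ': "ideal ((+>) P ` Q) (R Quot P)" by (rule ring_ideal_imp_quot_ideal[OF iP iQ])
  have sub: "(+>) P ` Q \<subseteq> carrier (R Quot P)"
    using iQ' ideal.axioms(1) additive_subgroup.a_subset by blast
  have "\<Union> ((+>) P ` Q) = Q" using ideal_incl_iff[OF iP iQ] PQ by auto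
  then have mem: "\<And>a. a \<in> carrier R \<Longrightarrow> a \<in> Q \<longleftrightarrow> P +> a \<in> (+>) P ` Q"
    using canonical_proj_vimage_mem_iff[OF iP sub] by auto
  have carr: "carrier (R Quot P) = (+>) P ` carrier R"
    unfolding FactRing_def A_RCOSETS_def' by auto
  show ?thesis
  proof (rule primeidealI[OF iQ' ideal.quotient_is_cring[OF iP is_cring]])
    show "carrier (R Quot P) \<noteq> (+>) P ` Q"
    proof
      assume "carrier (R Quot P) = (+>) P ` Q"
      then have "\<forall>a\<in>carrier R. a \<in> Q" using mem carr by auto
      then show False
        using primeideal.I_notcarr[OF Q] iQ ideal.axioms(1) additive_subgroup.a_subset by blast
    qed
  next
    fix a b assume ab: "a \<in> carrier (R Quot P)" "b \<in> carrier (R Quot P)"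
      "a \<otimes>\<^bsub>R Quot P\<^esub> b \<in> (+>) P ` Q"
    obtain x y where xy: "x \<in> carrier R" "y \<in> carrier R" "a = P +> x" "b = P +> y"
      using ab(1,2) carr by auto
    have "a \<otimes>\<^bsub>R Quot P\<^esub> b = P +> (x \<otimes> y)"
      using ideal.rcoset_mult_add[OF iP xy(1,2)] xy unfolding FactRing_def by simp
    then have "x \<otimes> y \<in> Q" using mem[of "x \<otimes> y"] ab(3) xy by auto
    then have "x \<in> Q \<or> y \<in> Q" using primeideal.I_prime[OF Q xy(1,2)] by blast
    then show "a \<in> (+>) P ` Q \<or> b \<in> (+>) P ` Q" using xy mem by auto
  qed
qed

lemma (in cring) pdim_primes_above_le_krull_dim_Quot:
  assumes P: "primeideal P R"
  shows "pdim (\<subseteq>) {Q \<in> Spec R. P \<subseteq> Q} \<le> krull_dim (R Quot P)"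
  unfolding krull_dim_def
proof (rule pdim_le_pdim_inj_on)
  have iP: "ideal P R" using P primeideal.axioms(1) by blast
  have "\<Union> ((+>) P ` Q) = Q" if "Q \<in> Spec R" "P \<subseteq> Q" for Q
    using that ideal_incl_iff[OF iP] primeideal.axioms(1) unfolding Spec_def by blast
  then show "inj_on (\<lambda>Q. (+>) P ` Q) {Q \<in> Spec R. P \<subseteq> Q}"
    by (intro inj_on_inverseI[where g = Union]) blast
  show "(\<lambda>Q. (+>) P ` Q) ` {Q \<in> Spec R. P \<subseteq> Q} \<subseteq> Spec (R Quot P)"
    using primeideal_quot_primeideal[OF P] unfolding Spec_def by blast
qed blast

lemma (in cring) krull_dim_le_if_min_primes:
  assumes bound: "\<And>P. P \<in> min_primes R \<Longrightarrow> krull_dim (R Quot P) \<le> d"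
  shows "krull_dim R \<le> d"
  unfolding krull_dim_def pdim_def[of "(\<subseteq>)"]
proof (rule SUP_least)
  fix C assume "C \<in> {C. C \<subseteq> Spec R \<and> finite C \<and> C \<noteq> {} \<and> (\<forall>x\<in>C. \<forall>y\<in>C. x \<subseteq> y \<or> y \<subseteq> x)}"
  then have C: "C \<subseteq> Spec R" "finite C" "C \<noteq> {}" "\<forall>x\<in>C. \<forall>y\<in>C. x \<subseteq> y \<or> y \<subseteq> x"
    by auto
  then have "\<Inter>C \<in> C" by (intro Inter_in_chain) (auto simp: subset.chain_def)
  then obtain P where P: "P \<in> min_primes R" "P \<subseteq> \<Inter>C"
    using C(1) exists_min_prime_subset by blast
  then have "C \<subseteq> {Q \<in> Spec R. P \<subseteq> Q}" using C(1) by blast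
  then have "enat (card C - 1) \<le> pdim (\<subseteq>) {Q \<in> Spec R. P \<subseteq> Q}"
    using C(2-4) by (rule chain_card_le_pdim)
  also have "\<dots> \<le> krull_dim (R Quot P)"
    using P by (intro pdim_primes_above_le_krull_dim_Quot) (simp add: min_primes_def Spec_def)
  also have "\<dots> \<le> d" using bound P by blast
  finally show "enat (card C - 1) \<le> d" .
qed

lemma pdim_le_krull_dim_if_saturated_embedding:
  fixes \<Psi> :: "'y::order \<Rightarrow> 'a set"
  assumes "saturated_embedding \<Psi> R"
  shows "pdim (\<le>) (UNIV :: 'y set) \<le> krull_dim R"
  unfolding krull_dim_def
proof (rule pdim_le_pdim_inj_on)
  have ord: "\<And>x y. x \<le> y \<longleftrightarrow> \<Psi> x \<subseteq> \<Psi> y"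
    using assms unfolding saturated_embedding_def by blast
  then show "inj_on \<Psi> UNIV" by (intro injI) (metis order_antisym order_refl)
  show "\<Psi> ` UNIV \<subseteq> Spec R" using assms unfolding saturated_embedding_def by blast
  show "\<And>x y. x \<le> y \<Longrightarrow> \<Psi> x \<subseteq> \<Psi> y" using ord by blast
qed

lemma krull_dim_Quot_le_pdim_if_coheight_preserving:
  fixes \<Psi> :: "'y::order \<Rightarrow> 'a set"
  assumes "coheight_preserving_min \<Psi> R" and "P \<in> min_primes R"
  shows "krull_dim (R Quot P) \<le> pdim (\<le>) (UNIV :: 'y set)"
  using assms pdim_mono[of _ UNIV] unfolding coheight_preserving_min_def by fastforce

theorem mainTheorem9:
  fixes R :: "('a, 'b) ring_scheme" and M :: "'a set"
    and \<Psi> :: "'y::{order,finite} \<Rightarrow> 'a set"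
  assumes unique_max: "\<exists>!m::'y. \<forall>z. m \<le> z \<longrightarrow> z = m"
    and local: "local_ring R M"
    and noeth: "noetherian_ring R"
    and reduced: "reduced_ring R"
    and rat: "contains_rationals R"
    and card_S: "carrier R \<approx> (UNIV :: real set)"
    and card_res: "carrier (R Quot M) \<approx> (UNIV :: real set)"
    and sat: "saturated_embedding \<Psi> R"
    and coh: "coheight_preserving_min \<Psi> R"
  shows "pdim (\<le>) (UNIV :: 'y set) = krull_dim R"
proof (rule antisym)
  show "pdim (\<le>) (UNIV :: 'y set) \<le> krull_dim R"
    using sat by (rule pdim_le_krull_dim_if_saturated_embedding)
  interpret cring R using local unfolding local_ring_def by blast
  show "krull_dim R \<le> pdim (\<le>) (UNIV :: 'y set)"
    using coh by (intro krull_dim_le_if_min_primes krull_dim_Quot_le_pdim_if_coheight_preserving)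
qed

end
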